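(* Let $\alpha>0$ be an ordinal and let $\mathcal{X}\in\mathfrak{C}_\alpha$. Then there is a countable collection $\{\mathcal{Y}_m\}_{m=1}^\infty$ of families of metric spaces such that for every $R\in\mathbb{R}^{\mathbb{N}}$ there is an $n$ with $\mathcal{X}\xrightarrow{R}\mathcal{Y}_n$ and $\mathcal{Y}_n\in\mathfrak{C}_\beta$ for some $\beta<\alpha$.
   Context: A family $\mathcal{U}$ of metric subspaces of a metric space $(X,d)$ is $r$-disjoint if $d(x,y)>r$ whenever $x\in U$, $y\in U'$, $U\neq U'$ in $\mathcal{U}$. For families $\mathcal{X},\mathcal{Y}$ and $R\in\mathbb{R}^{\mathbb{N}}$, $\mathcal{X}\xrightarrow{R}\mathcal{Y}$ means: there is an integer $k$ such that for each $X\in\mathcal{X}$ there are subcollections $\mathcal{U}_1,\dots,\mathcal{U}_k\subseteq\mathcal{Y}$ of subspaces of $X$, each $\mathcal{U}_i$ being $R_i$-disjoint, with $\bigcup_i\mathcal{U}_i$ covering $X$. A family is bounded if the diameters of its members are uniformly bounded. $\mathfrak{C}_0$ is the class of bounded families; for an ordinal $\alpha>0$, $\mathfrak{C}_\alpha$ is the class of families $\mathcal{X}$ such that for every $R\in\mathbb{R}^{\mathbb{N}}$ there exist $\beta<\alpha$ and $\mathcal{Y}\in\mathfrak{C}_\beta$ with $\mathcal{X}\xrightarrow{R}\mathcal{Y}$. *)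

theory Defs
  imports "HOL-Analysis.Analysis"
begin

definition is_subspace :: "'a metric \<Rightarrow> 'a metric \<Rightarrow> bool" where
  "is_subspace U X \<longleftrightarrow> mspace U \<subseteq> mspace X \<and> U = submetric X (mspace U)"

definition r_disjoint :: "real \<Rightarrow> 'a metric \<Rightarrow> 'a metric set \<Rightarrow> bool" where
  "r_disjoint r X \<U> \<longleftrightarrow>
     (\<forall>U\<in>\<U>. \<forall>U'\<in>\<U>. U \<noteq> U' \<longrightarrow>
        (\<forall>x\<in>mspace U. \<forall>y\<in>mspace U'. mdist X x y > r))"

definition bounded_family :: "'a metric set \<Rightarrow> bool" where
  "bounded_family \<X> \<longleftrightarrow>
     (\<exists>B. \<forall>M\<in>\<X>. \<forall>x\<in>mspace M. \<forall>y\<in>mspace M. mdist M x y \<le> B)"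

text \<open>The relation X --R--> Y; the sequence R is indexed by the positive naturals 1,2,...\<close>
definition decomposes :: "'a metric set \<Rightarrow> (nat \<Rightarrow> real) \<Rightarrow> 'a metric set \<Rightarrow> bool" where
  "decomposes \<X> R \<Y> \<longleftrightarrow>
     (\<exists>k::nat. \<forall>X\<in>\<X>. \<exists>\<U>::nat \<Rightarrow> 'a metric set.
        (\<forall>i\<in>{1..k}. \<U> i \<subseteq> \<Y> \<and> (\<forall>U\<in>\<U> i. is_subspace U X) \<and> r_disjoint (R i) X (\<U> i))
        \<and> mspace X \<subseteq> (\<Union>i\<in>{1..k}. \<Union>U\<in>\<U> i. mspace U))"

text \<open>The classes C_alpha, for alpha ranging over a well-ordered type 'o (every ordinal is
  represented as an element of some well-ordered type; the definition of C_alpha only depends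
  on the initial segment below alpha).\<close>
definition C_class :: "'o::wellorder \<Rightarrow> 'a metric set set" where
  "C_class = wfrec {(x, y). x < y}
     (\<lambda>f \<alpha>. if (\<forall>\<beta>. \<not> \<beta> < \<alpha>) then {\<X>. bounded_family \<X>}
            else {\<X>. \<forall>R. \<exists>\<beta>. \<beta> < \<alpha> \<and> (\<exists>\<Y>. \<Y> \<in> f \<beta> \<and> decomposes \<X> R \<Y>)})"

lemma C_class_unfold:
  "C_class \<alpha> = (if (\<forall>\<beta>. \<not> \<beta> < \<alpha>) then {\<X>. bounded_family \<X>}
            else {\<X>. \<forall>R. \<exists>\<beta>. \<beta> < \<alpha> \<and> (\<exists>\<Y>. \<Y> \<in> C_class \<beta> \<and> decomposes \<X> R \<Y>)})"
  unfolding C_class_def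
  apply (subst wfrec[OF wf])
  apply (simp only: cut_def)
  apply (simp cong: conj_cong)
  done

end

theory Submission
  imports Defs "HOL-Library.Countable"
begin

text \<open>Only the first \<open>k\<close> radii of \<open>R\<close> matter for a decomposition into \<open>k\<close> disjoint
  collections, and shrinking them preserves it. Rounding these \<open>k\<close> radii up to natural
  numbers gives a finite list, and there are only countably many such lists; choosing one
  target family per list therefore yields a countable collection serving every \<open>R\<close>.\<close>

definition decomposes_with :: "nat \<Rightarrow> 'a metric set \<Rightarrow> (nat \<Rightarrow> real) \<Rightarrow> 'a metric set \<Rightarrow> bool" where
  "decomposes_with k \<X> R \<Y> \<longleftrightarrow>
     (\<forall>X\<in>\<X>. \<exists>\<U>::nat \<Rightarrow> 'a metric set.
        (\<forall>i\<in>{1..k}. \<U> i \<subseteq> \<Y> \<and> (\<forall>U\<in>\<U> i. is_subspace U X) \<and> r_disjoint (R i) X (\<U> i))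
        \<and> mspace X \<subseteq> (\<Union>i\<in>{1..k}. \<Union>U\<in>\<U> i. mspace U))"

lemma decomposes_iff_decomposes_with: "decomposes \<X> R \<Y> \<longleftrightarrow> (\<exists>k. decomposes_with k \<X> R \<Y>)"
  unfolding decomposes_def decomposes_with_def by (rule refl)

lemma r_disjoint_mono:
  assumes "r \<le> r'" "r_disjoint r' X \<U>" shows "r_disjoint r X \<U>"
  using assms unfolding r_disjoint_def by (meson le_less_trans)

lemma decomposes_with_mono:
  assumes "\<forall>i\<in>{1..k}. R i \<le> R' i" "decomposes_with k \<X> R' \<Y>"
  shows "decomposes_with k \<X> R \<Y>"
  using assms unfolding decomposes_with_def by (meson r_disjoint_mono)

definition list_radii :: "nat list \<Rightarrow> nat \<Rightarrow> real" where
  "list_radii s i = real (s ! (i - 1))"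

lemma list_radii_ceiling_bounds:
  assumes "i \<in> {1..k}"
  shows "R i \<le> list_radii (map (\<lambda>j. nat \<lceil>R (Suc j)\<rceil>) [0..<k]) i"
    and "list_radii (map (\<lambda>j. nat \<lceil>R (Suc j)\<rceil>) [0..<k]) i \<le> max (R i) 0 + 1"
proof -
  have "i - 1 < k" "Suc (i - 1) = i" using assms by auto
  then have "list_radii (map (\<lambda>j. nat \<lceil>R (Suc j)\<rceil>) [0..<k]) i = real (nat \<lceil>R i\<rceil>)"
    by (simp add: list_radii_def del: upt_Suc)
  moreover have "R i \<le> real (nat \<lceil>R i\<rceil>)" "real (nat \<lceil>R i\<rceil>) \<le> max (R i) 0 + 1"
    by linarith+
  ultimately show "R i \<le> list_radii (map (\<lambda>j. nat \<lceil>R (Suc j)\<rceil>) [0..<k]) i"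
    and "list_radii (map (\<lambda>j. nat \<lceil>R (Suc j)\<rceil>) [0..<k]) i \<le> max (R i) 0 + 1"
    by simp_all
qed

lemma decomposes_countable_choice:
  assumes "\<forall>R. \<exists>\<Y>. P \<Y> \<and> decomposes \<X> R \<Y>"
  shows "\<exists>\<Y>::nat \<Rightarrow> 'a metric set. \<forall>R. \<exists>n. decomposes \<X> R (\<Y> n) \<and> P (\<Y> n)"
proof -
  define good where
    "good s \<Y> \<longleftrightarrow> P \<Y> \<and> decomposes_with (length s) \<X> (list_radii s) \<Y>" for s \<Y>
  define F where "F n = (SOME \<Y>. good (from_nat n :: nat list) \<Y>)" for n
  have "\<exists>n. decomposes \<X> R (F n) \<and> P (F n)" for R
  proof -
    obtain \<Y> k where \<Y>: "P \<Y>" "decomposes_with k \<X> (\<lambda>i. max (R i) 0 + 1) \<Y>"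
      using assms decomposes_iff_decomposes_with by blast
    define s where "s = map (\<lambda>j. nat \<lceil>R (Suc j)\<rceil>) [0..<k]"
    have "length s = k" by (simp add: s_def)
    have "\<forall>i\<in>{1..k}. list_radii s i \<le> max (R i) 0 + 1"
      unfolding s_def using list_radii_ceiling_bounds(2) by blast
    then have "decomposes_with k \<X> (list_radii s) \<Y>"
      using \<Y>(2) by (rule decomposes_with_mono)
    with \<Y>(1) \<open>length s = k\<close> have "good s \<Y>"
      unfolding good_def by simp
    then have "good s (F (to_nat s))"
      unfolding F_def by (simp add: someI)
    moreover have "\<forall>i\<in>{1..k}. R i \<le> list_radii s i"
      unfolding s_def using list_radii_ceiling_bounds(1) by blast
    ultimately have "P (F (to_nat s))" "decomposes_with k \<X> R (F (to_nat s))"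
      unfolding good_def using \<open>length s = k\<close> decomposes_with_mono by auto
    then show ?thesis using decomposes_iff_decomposes_with by blast
  qed
  then show ?thesis by blast
qed

theorem lemma3p6:
  fixes \<alpha> :: "'o::wellorder" and \<X> :: "'a metric set"
  assumes "\<exists>\<beta>. \<beta> < \<alpha>"
    and "\<X> \<in> C_class \<alpha>"
  shows "\<exists>\<Y>::nat \<Rightarrow> 'a metric set. \<forall>R::nat \<Rightarrow> real. \<exists>n.
           decomposes \<X> R (\<Y> n) \<and> (\<exists>\<beta>. \<beta> < \<alpha> \<and> \<Y> n \<in> (C_class \<beta> :: 'a metric set set))"
proof -
  have "\<not> (\<forall>\<beta>. \<not> \<beta> < \<alpha>)" using assms(1) by blast
  then have "C_class \<alpha> = {\<X>. \<forall>R. \<exists>\<beta>. \<beta> < \<alpha> \<and>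
      (\<exists>\<Y>. \<Y> \<in> (C_class \<beta> :: 'a metric set set) \<and> decomposes \<X> R \<Y>)}"
    using C_class_unfold[of \<alpha>] by (simp only: if_False)
  with assms(2) have "\<forall>R. \<exists>\<beta>. \<beta> < \<alpha> \<and> (\<exists>\<Y>. \<Y> \<in> (C_class \<beta> :: 'a metric set set) \<and> decomposes \<X> R \<Y>)"
    by simp
  then have "\<forall>R. \<exists>\<Y>. (\<exists>\<beta>. \<beta> < \<alpha> \<and> \<Y> \<in> (C_class \<beta> :: 'a metric set set)) \<and> decomposes \<X> R \<Y>"
    by blast
  then show ?thesis by (rule decomposes_countable_choice)
qed

end
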